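(* Let $G_1=(V,D_1,B_1)$ and $G_2=(V,D_2,B_2)$ be simple mixed graphs with the same skeleton and the same collider triples, and let $(\Lambda_i,\Omega_i)\in\mathbb{R}^{D_i}\times\mathit{PD}(B_i)$ for $i=1,2$. If $(\Lambda_2,\Omega_2^{od})$ equals the edge labeling on $G_2$ induced by $(\Lambda_1,\Omega_1)$, then $\det(I-\Lambda_1)=\det(I-\Lambda_2)$. In particular, if $\Lambda_1\in\mathbb{R}^{D_1}_{\mathrm{reg}}$ then $\Lambda_2\in\mathbb{R}^{D_2}_{\mathrm{reg}}$.
   Context: A mixed graph with finite vertex set $V$ is a triple $G=(V,D,B)$ with $D$ a set of ordered pairs $(i,j)$, $i\ne j$ (directed edges $i\to j$, head $j$) and $B$ a set of unordered pairs $\{i,j\}$, $i\ne j$ (bidirected edges $i\leftrightarrow j$, both endpoints heads). It is simple if any two distinct nodes are joined by at most one edge. The skeleton is the undirected graph obtained by replacing all edges by undirected ones. A collider triple is a triple $(i,j,k)$ with an edge between $i$ and $j$ and an edge between $j$ and $k$, $j$ being a head on both (regardless of adjacency of $i,k$). $\mathbb{R}^D$ is the set of real $V\times V$ matrices $\Lambda$ with $\lambda_{ij}=0$ for $(i,j)\notin D$, $\mathbb{R}^D_{\mathrm{reg}}$ those with $I-\Lambda$ invertible; $\mathit{PD}(B)$ is the set of positive definite symmetric matrices $\Omega$ with $\omega_{ij}=0$ for $i\neq j$, $\{i,j\}\notin B$. For a matrix $\Omega$, $\Omega^{od}$ denotes its off-diagonal part ($\Omega=\Omega^d+\Omega^{od}$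 with $\Omega^d$ diagonal). For simple $G_1,G_2$ with the same skeleton and $(\Lambda_1,\Omega_1)$ for $G_1$, the induced edge labeling on $G_2$ is the pair $(\Lambda_2,\Omega_2^{od})$ with $(\Lambda_2)_{ij}=(\Lambda_1)_{ij}$ if $i\to j\in G_1$ and $i\to j\in G_2$; $=(\Lambda_1)_{ji}$ if $j\to i\in G_1$ and $i\to j\in G_2$; $=(\Omega_1)_{ij}$ if $i\leftrightarrow j\in G_1$ and $i\to j\in G_2$; $=0$ if $i\to j\notin G_2$; and $(\Omega_2^{od})_{ij}=(\Lambda_1)_{ij}$ if $i\to j\in G_1$ and $i\leftrightarrow j\in G_2$; $=(\Lambda_1)_{ji}$ if $j\to i\in G_1$ and $i\leftrightarrow j\in G_2$; $=(\Omega_1)_{ij}$ if $i\leftrightarrow j\in G_1$ and $i\leftrightarrow j\in G_2$; $=0$ if $i\leftrightarrow j\notin G_2$ or $i=j$. *)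

theory Defs
  imports "HOL-Analysis.Analysis"
begin

text \<open>Vertex set V is the finite type 'n (V = UNIV). A mixed graph is given by
  D :: ('n \<times> 'n) set (directed edges i \<rightarrow> j as (i,j)) and
  B :: 'n set set (bidirected edges as unordered pairs {i,j}).\<close>

definition mixed_graph :: "('n \<times> 'n) set \<Rightarrow> 'n set set \<Rightarrow> bool" where
  "mixed_graph D B \<longleftrightarrow> (\<forall>(i,j)\<in>D. i \<noteq> j) \<and> (\<forall>e\<in>B. \<exists>i j. i \<noteq> j \<and> e = {i,j})"

definition simple_mixed_graph :: "('n \<times> 'n) set \<Rightarrow> 'n set set \<Rightarrow> bool" where
  "simple_mixed_graph D B \<longleftrightarrow> mixed_graph D B \<and>
     (\<forall>i j. i \<noteq> j \<longrightarrow> \<not> ((i,j) \<in> D \<and> (j,i) \<in> D) \<and> \<not> ((i,j) \<in> D \<and> {i,j} \<in> B))"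

definition skeleton :: "('n \<times> 'n) set \<Rightarrow> 'n set set \<Rightarrow> 'n set set" where
  "skeleton D B = {{i,j} | i j. (i,j) \<in> D} \<union> B"

definition head_edge :: "('n \<times> 'n) set \<Rightarrow> 'n set set \<Rightarrow> 'n \<Rightarrow> 'n \<Rightarrow> bool" where
  "head_edge D B i j \<longleftrightarrow> (i,j) \<in> D \<or> {i,j} \<in> B"

definition collider_triples :: "('n \<times> 'n) set \<Rightarrow> 'n set set \<Rightarrow> ('n \<times> 'n \<times> 'n) set" where
  "collider_triples D B = {(i,j,k) | i j k. i \<noteq> k \<and> head_edge D B i j \<and> head_edge D B k j}"

definition supp_D :: "('n::finite \<times> 'n) set \<Rightarrow> (real^'n^'n) set" where
  "supp_D D = {L. \<forall>i j. (i,j) \<notin> D \<longrightarrow> L$i$j = 0}"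

definition pos_def :: "real^'n^'n \<Rightarrow> bool" where
  "pos_def M \<longleftrightarrow> transpose M = M \<and> (\<forall>x. x \<noteq> 0 \<longrightarrow> x \<bullet> (M *v x) > 0)"

definition PD :: "('n::finite) set set \<Rightarrow> (real^'n^'n) set" where
  "PD B = {M. pos_def M \<and> (\<forall>i j. i \<noteq> j \<and> {i,j} \<notin> B \<longrightarrow> M$i$j = 0)}"

definition offdiag :: "real^'n^'n \<Rightarrow> real^'n^'n" where
  "offdiag M = (\<chi> i j. if i = j then 0 else M$i$j)"

definition induced_label :: "('n \<times> 'n) set \<Rightarrow> 'n set set \<Rightarrow> real^'n^'n \<Rightarrow> real^'n^'n \<Rightarrow> 'n \<Rightarrow> 'n \<Rightarrow> real" where
  "induced_label D1 B1 L1 O1 i j =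
     (if (i,j) \<in> D1 then L1$i$j else if (j,i) \<in> D1 then L1$j$i
      else if {i,j} \<in> B1 then O1$i$j else 0)"

definition induced_Lambda :: "('n \<times> 'n) set \<Rightarrow> 'n set set \<Rightarrow> ('n \<times> 'n) set \<Rightarrow> real^'n^'n \<Rightarrow> real^'n^'n \<Rightarrow> real^'n^'n" where
  "induced_Lambda D1 B1 D2 L1 O1 = (\<chi> i j. if (i,j) \<in> D2 then induced_label D1 B1 L1 O1 i j else 0)"

definition induced_Omega_od :: "('n \<times> 'n) set \<Rightarrow> 'n set set \<Rightarrow> 'n set set \<Rightarrow> real^'n^'n \<Rightarrow> real^'n^'n \<Rightarrow> real^'n^'n" where
  "induced_Omega_od D1 B1 B2 L1 O1 = (\<chi> i j. if i \<noteq> j \<and> {i,j} \<in> B2 then induced_label D1 B1 L1 O1 i j else 0)"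

end

theory Submission
  imports Defs
begin

text \<open>Expand both determinants by the Leibniz formula: only permutations \<open>p\<close> with
  \<open>i \<rightarrow> p i\<close> an arc at every moved point \<open>i\<close> contribute. Such a \<open>p\<close> for \<open>G\<^sub>1\<close> has
  no 2-cycles, and consecutive arcs of its cycles meet head to tail, so no vertex of a cycle
  is a collider on it in \<open>G\<^sub>1\<close>. Since \<open>G\<^sub>2\<close> has the same skeleton and colliders, each
  cycle is a directed cycle of \<open>G\<^sub>2\<close> too, run either along \<open>p\<close> or against it.
  Reversing the cycles that run against \<open>G\<^sub>2\<close> is a sign-preserving bijection between the
  contributing permutations of the two graphs (reversing with respect to \<open>G\<^sub>1\<close> undoes it),
  and the induced labeling copies each edge label, so corresponding Leibniz terms agree.\<close>

text \<open>For \<open>p\<close>-invariant \<open>T\<close>, this reverses the cycles of \<open>p\<close> inside \<open>T\<close>.\<close>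
definition reverse_on :: "('a \<Rightarrow> 'a) \<Rightarrow> 'a set \<Rightarrow> 'a \<Rightarrow> 'a" where
  "reverse_on p T = (\<lambda>i. if i \<in> T then inv p i else p i)"

context
  fixes p :: "'a \<Rightarrow> 'a" and T :: "'a set"
  assumes perm: "p permutes UNIV" and invariant: "p ` T = T"
begin

lemma invariant_mem_iff: "p i \<in> T \<longleftrightarrow> i \<in> T"
  using invariant permutes_inj[OF perm] by (metis inj_image_mem_iff)

lemma invariant_inv_mem_iff: "inv p i \<in> T \<longleftrightarrow> i \<in> T"
  using invariant_mem_iff[of "inv p i"] by (simp add: permutes_inverses[OF perm])

lemma restrict_id_invariant_permutes:
  shows "restrict_id p T permutes UNIV" and "restrict_id p (- T) permutes UNIV"
proof -
  have "inj_on p X" for X using permutes_inj_on[OF perm] .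
  moreover have "p ` (- T) = - T"
    using invariant permutes_bij[OF perm] by (metis bij_image_Compl_eq)
  ultimately have "bij_betw p T T" "bij_betw p (- T) (- T)"
    using invariant by (auto simp: bij_betw_def)
  then show "restrict_id p T permutes UNIV" "restrict_id p (- T) permutes UNIV"
    by (auto intro: permutes_subset[OF permutes_restrict_id])
qed

lemma restrict_id_Compl_comp: "p = restrict_id p (- T) \<circ> restrict_id p T"
  by (auto simp: fun_eq_iff restrict_id_def invariant_mem_iff)

lemma inv_restrict_id: "inv (restrict_id p T) = restrict_id (inv p) T"
proof -
  have "restrict_id p T (restrict_id (inv p) T i) = i" for i
    by (simp add: restrict_id_def permutes_inverses[OF perm] invariant_inv_mem_iff)
  then show ?thesis
    using restrict_id_invariant_permutes(1) by (metis permutes_inv_eq ext)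
qed

lemma reverse_on_eq_comp: "reverse_on p T = restrict_id p (- T) \<circ> inv (restrict_id p T)"
  unfolding inv_restrict_id
  by (auto simp: fun_eq_iff reverse_on_def restrict_id_def invariant_inv_mem_iff)

lemma permutes_reverse_on: "reverse_on p T permutes UNIV"
  unfolding reverse_on_eq_comp
  using restrict_id_invariant_permutes by (blast intro: permutes_compose permutes_inv)

lemma sign_reverse_on:
  assumes "finite (UNIV :: 'a set)"
  shows "sign (reverse_on p T) = sign p"
proof -
  have perms: "permutation (restrict_id p T)" "permutation (restrict_id p (- T))"
    using restrict_id_invariant_permutes assms by (auto simp: permutation_permutes)
  have "sign (reverse_on p T) = sign (restrict_id p (- T)) * sign (restrict_id p T)"
    unfolding reverse_on_eq_comp using perms
    by (simp add: sign_compose permutation_inverse sign_inverse)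
  also have "\<dots> = sign p"
    by (subst (3) restrict_id_Compl_comp) (simp add: sign_compose perms)
  finally show ?thesis .
qed

lemma inv_reverse_on: "inv (reverse_on p T) = reverse_on (inv p) T"
proof -
  have "reverse_on p T (reverse_on (inv p) T i) = i" for i
    by (auto simp: reverse_on_def permutes_inverses[OF perm] inv_inv_eq permutes_bij[OF perm]
        invariant_mem_iff invariant_inv_mem_iff)
  then show ?thesis
    using permutes_reverse_on by (metis permutes_inv_eq ext)
qed

lemma reverse_on_reverse_on: "reverse_on (reverse_on p T) T = p"
proof
  fix i
  show "reverse_on (reverse_on p T) T i = p i"
    by (simp add: reverse_on_def[of "reverse_on p T"] inv_reverse_on)
      (simp add: reverse_on_def inv_inv_eq permutes_bij[OF perm])
qed

lemma prod_reverse_on: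
  fixes f g :: "'a \<Rightarrow> 'a \<Rightarrow> 'b::comm_monoid_mult"
  assumes "\<And>i. i \<in> T \<Longrightarrow> f i (inv p i) = g (inv p i) i"
    and "\<And>i. i \<notin> T \<Longrightarrow> f i (p i) = g i (p i)"
  shows "(\<Prod>i\<in>UNIV. f i (reverse_on p T i)) = (\<Prod>i\<in>UNIV. g i (p i))"
proof -
  let ?r = "restrict_id (inv p) T"
  have "(\<Prod>i\<in>UNIV. g i (p i)) = (\<Prod>i\<in>UNIV. g (?r i) (p (?r i)))"
    using prod.permute[OF permutes_inv[OF restrict_id_invariant_permutes(1)]]
    by (simp add: comp_def inv_restrict_id)
  also have "\<dots> = (\<Prod>i\<in>UNIV. f i (reverse_on p T i))"
    using assms by (intro prod.cong)
      (auto simp: reverse_on_def restrict_id_def permutes_inverses[OF perm])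
  finally show ?thesis by simp
qed

end

definition arc_permutation :: "('a \<times> 'a) set \<Rightarrow> ('a \<Rightarrow> 'a) \<Rightarrow> bool" where
  "arc_permutation D p \<longleftrightarrow> p permutes UNIV \<and> (\<forall>i. p i \<noteq> i \<longrightarrow> (i, p i) \<in> D)"

lemma arc_permutation_permutes: "arc_permutation D p \<Longrightarrow> p permutes UNIV"
  by (simp add: arc_permutation_def)

lemma det_eq_sum_arc_permutations:
  fixes A :: "'a::comm_ring_1^'n^'n"
  assumes "\<And>i j. i \<noteq> j \<Longrightarrow> (i, j) \<notin> D \<Longrightarrow> A $ i $ j = 0"
  shows "det A = (\<Sum>p | arc_permutation D p. of_int (sign p) * (\<Prod>i\<in>UNIV. A $ i $ p i))"
  unfolding det_def
proof (rule sum.mono_neutral_right)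
  show "{p. arc_permutation D p} \<subseteq> {p. p permutes UNIV}"
    by (auto simp: arc_permutation_def)
  show "\<forall>p\<in>{p. p permutes UNIV} - {p. arc_permutation D p}.
          of_int (sign p) * (\<Prod>i\<in>UNIV. A $ i $ p i) = 0"
  proof
    fix p assume "p \<in> {p. p permutes UNIV} - {p. arc_permutation D p}"
    then obtain i where "i \<noteq> p i" "(i, p i) \<notin> D"
      by (force simp: arc_permutation_def)
    then have "A $ i $ p i = 0"
      by (rule assms)
    then have "(\<Prod>i\<in>UNIV. A $ i $ p i) = 0"
      by (meson UNIV_I finite prod_zero)
    then show "of_int (sign p) * (\<Prod>i\<in>UNIV. A $ i $ p i) = 0"
      by simp
  qed
qed simp

context
  fixes D :: "('a \<times> 'a) set" and B :: "'a set set"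
  assumes simple: "simple_mixed_graph D B"
begin

lemma simple_mixed_graph_irrefl: "(i, i) \<notin> D"
  using simple by (auto simp: simple_mixed_graph_def mixed_graph_def)

lemma simple_mixed_graph_asym:
  assumes "(i, j) \<in> D"
  shows "(j, i) \<notin> D"
proof -
  have "i \<noteq> j" using assms simple_mixed_graph_irrefl by blast
  then show ?thesis using simple assms unfolding simple_mixed_graph_def by blast
qed

lemma simple_mixed_graph_arc_not_bidirected:
  assumes "(i, j) \<in> D"
  shows "{i, j} \<notin> B"
proof -
  have "i \<noteq> j" using assms simple_mixed_graph_irrefl by blast
  then show ?thesis using simple assms unfolding simple_mixed_graph_def by blast
qed

lemma arc_permutation_no_2cycle:
  assumes "arc_permutation D p" "p i \<noteq> i"
  shows "p (p i) \<noteq> i"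
proof
  assume "p (p i) = i"
  then have "(p i, i) \<in> D" "(i, p i) \<in> D"
    using assms unfolding arc_permutation_def by metis+
  then show False using simple_mixed_graph_asym by blast
qed

end

definition backward_vertices :: "('a \<times> 'a) set \<Rightarrow> ('a \<Rightarrow> 'a) \<Rightarrow> 'a set" where
  "backward_vertices D p = {i. (i, inv p i) \<in> D}"

text \<open>Reverses every cycle of \<open>p\<close> that runs against the arcs of \<open>D\<close>.\<close>
definition orient_along :: "('a \<times> 'a) set \<Rightarrow> ('a \<Rightarrow> 'a) \<Rightarrow> 'a \<Rightarrow> 'a" where
  "orient_along D p = reverse_on p (backward_vertices D p)"

locale equal_skeleton_colliders =
  fixes D1 :: "('n::finite \<times> 'n) set" and B1 :: "'n set set"
    and D2 :: "('n \<times> 'n) set" and B2 :: "'n set set"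
  assumes simple1: "simple_mixed_graph D1 B1" and simple2: "simple_mixed_graph D2 B2"
    and skeleton_eq: "skeleton D1 B1 = skeleton D2 B2"
    and colliders_eq: "collider_triples D1 B1 = collider_triples D2 B2"
begin

lemma adjacent_head_edge:
  assumes "(x, y) \<in> D1 \<or> (y, x) \<in> D1" "(y, x) \<notin> D2"
  shows "head_edge D2 B2 x y"
proof -
  have "{x, y} \<in> skeleton D1 B1"
    using assms(1) by (auto simp: skeleton_def insert_commute)
  then have "{x, y} \<in> B2 \<or> (\<exists>i j. {x, y} = {i, j} \<and> (i, j) \<in> D2)"
    unfolding skeleton_eq by (auto simp: skeleton_def)
  then show ?thesis
    using assms(2) by (auto simp: head_edge_def doubleton_eq_iff)
qed

context
  fixes p :: "'n \<Rightarrow> 'n"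
  assumes arc: "arc_permutation D1 p"
begin

private lemmas perm = arc_permutation_permutes[OF arc]

lemma arc_permutation_out_arc:
  assumes moved: "p j \<noteq> j"
  shows "(j, inv p j) \<in> D2 \<or> (j, p j) \<in> D2"
proof (rule ccontr)
  assume no_out_arc: "\<not> ?thesis"
  have out_arc: "(j, p j) \<in> D1"
    using arc moved by (simp add: arc_permutation_def)
  have in_arc: "(inv p j, j) \<in> D1"
    using arc moved unfolding arc_permutation_def by (metis permutes_inverses(1)[OF perm])
  have "inv p j \<noteq> p j"
    using arc_permutation_no_2cycle[OF simple1 arc moved] permutes_inverses[OF perm] by metis
  moreover have "head_edge D2 B2 (inv p j) j" "head_edge D2 B2 (p j) j"
    using no_out_arc in_arc out_arc adjacent_head_edge by blast+
  ultimately have "(inv p j, j, p j) \<in> collider_triples D1 B1"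
    unfolding colliders_eq by (auto simp: collider_triples_def)
  then have "head_edge D1 B1 (p j) j"
    by (simp add: collider_triples_def)
  then show False
    using out_arc simple_mixed_graph_asym[OF simple1]
      simple_mixed_graph_arc_not_bidirected[OF simple1]
    by (auto simp: head_edge_def insert_commute)
qed

lemma backward_vertex_inv:
  assumes "i \<in> backward_vertices D2 p"
  shows "inv p i \<in> backward_vertices D2 p"
proof -
  let ?k = "inv p i"
  have "(i, ?k) \<in> D2"
    using assms by (simp add: backward_vertices_def)
  then have "(?k, p ?k) \<notin> D2" and "p ?k \<noteq> ?k"
    using simple_mixed_graph_asym[OF simple2] simple_mixed_graph_irrefl[OF simple2]
    by (metis permutes_inverses(1)[OF perm])+
  then show ?thesis
    using arc_permutation_out_arc by (auto simp: backward_vertices_def)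
qed

lemma image_backward_vertices: "p ` backward_vertices D2 p = backward_vertices D2 p"
proof -
  have "inv p ` backward_vertices D2 p = backward_vertices D2 p"
    using backward_vertex_inv permutes_inj_on[OF permutes_inv[OF perm]]
    by (intro endo_inj_surj) auto
  then show ?thesis
    by (metis image_f_inv_f permutes_surj[OF perm])
qed

lemma arc_permutation_orient_along: "arc_permutation D2 (orient_along D2 p)"
  unfolding arc_permutation_def orient_along_def
proof (intro conjI allI impI)
  show "reverse_on p (backward_vertices D2 p) permutes UNIV"
    by (rule permutes_reverse_on[OF perm image_backward_vertices])
  fix i assume "reverse_on p (backward_vertices D2 p) i \<noteq> i"
  then show "(i, reverse_on p (backward_vertices D2 p) i) \<in> D2"
    using arc_permutation_out_arc[of i] by (auto simp: reverse_on_def backward_vertices_def)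
qed

lemma backward_vertices_orient_along:
  "backward_vertices D1 (orient_along D2 p) = backward_vertices D2 p"
proof -
  let ?T = "backward_vertices D2 p"
  have "(i, reverse_on (inv p) ?T i) \<in> D1 \<longleftrightarrow> i \<in> ?T" for i
  proof (cases "i \<in> ?T")
    case True
    then have "p i \<noteq> i"
      using simple_mixed_graph_irrefl[OF simple2]
      by (metis backward_vertices_def mem_Collect_eq permutes_inverses(2)[OF perm])
    then show ?thesis
      using True arc
      by (simp add: reverse_on_def arc_permutation_def inv_inv_eq permutes_bij[OF perm])
  next
    case False
    have "(i, inv p i) \<notin> D1"
    proof (cases "p i = i")
      case True
      then show ?thesis
        using simple_mixed_graph_irrefl[OF simple1] by (metis permutes_inverses(2)[OF perm])
    next
      case False
      then have "(inv p i, i) \<in> D1"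
        using arc unfolding arc_permutation_def by (metis permutes_inverses(1)[OF perm])
      then show ?thesis
        using simple_mixed_graph_asym[OF simple1] by blast
    qed
    then show ?thesis
      using False by (simp add: reverse_on_def)
  qed
  then show ?thesis
    unfolding orient_along_def backward_vertices_def[of D1]
      inv_reverse_on[OF perm image_backward_vertices]
    by blast
qed

lemma orient_along_orient_along: "orient_along D1 (orient_along D2 p) = p"
  by (simp only: orient_along_def[of D1] backward_vertices_orient_along)
    (simp add: orient_along_def reverse_on_reverse_on[OF perm image_backward_vertices])

lemma sign_orient_along: "sign (orient_along D2 p) = sign p"
  unfolding orient_along_def by (rule sign_reverse_on[OF perm image_backward_vertices]) simp

lemma prod_orient_along:
  assumes "L1 \<in> supp_D D1"
  shows "(\<Prod>i\<in>UNIV. (mat 1 - induced_Lambda D1 B1 D2 L1 O1) $ i $ orient_along D2 p i)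
    = (\<Prod>i\<in>UNIV. (mat 1 - L1) $ i $ p i)"
  unfolding orient_along_def
proof (rule prod_reverse_on[OF perm image_backward_vertices])
  fix i assume backward: "i \<in> backward_vertices D2 p"
  then have "(i, inv p i) \<in> D2" "i \<noteq> inv p i"
    using simple_mixed_graph_irrefl[OF simple2] by (auto simp: backward_vertices_def)
  moreover have "(inv p i, i) \<in> D1"
    using arc \<open>i \<noteq> inv p i\<close> unfolding arc_permutation_def
    by (metis permutes_inverses(1)[OF perm])
  ultimately show
    "(mat 1 - induced_Lambda D1 B1 D2 L1 O1) $ i $ inv p i = (mat 1 - L1) $ inv p i $ i"
    using simple_mixed_graph_asym[OF simple1]
    by (auto simp: mat_def induced_Lambda_def induced_label_def)
next
  fix i assume forward: "i \<notin> backward_vertices D2 p"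
  show "(mat 1 - induced_Lambda D1 B1 D2 L1 O1) $ i $ p i = (mat 1 - L1) $ i $ p i"
  proof (cases "p i = i")
    case True
    then show ?thesis
      using assms simple_mixed_graph_irrefl[OF simple1] simple_mixed_graph_irrefl[OF simple2]
      by (simp add: mat_def induced_Lambda_def supp_D_def)
  next
    case False
    then have "(i, p i) \<in> D2" "(i, p i) \<in> D1"
      using arc arc_permutation_out_arc forward
      by (auto simp: backward_vertices_def arc_permutation_def)
    then show ?thesis
      using False by (simp add: mat_def induced_Lambda_def induced_label_def)
  qed
qed

end

end

sublocale equal_skeleton_colliders \<subseteq> swapped: equal_skeleton_colliders D2 B2 D1 B1
  using simple1 simple2 skeleton_eq colliders_eq by unfold_locales simp_all

context equal_skeleton_colliders
begin

lemma bij_betw_orient_along: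
  "bij_betw (orient_along D2) {p. arc_permutation D1 p} {q. arc_permutation D2 q}"
  by (rule bij_betw_byWitness[where f' = "orient_along D1"])
    (auto simp: orient_along_orient_along swapped.orient_along_orient_along
      arc_permutation_orient_along swapped.arc_permutation_orient_along)

theorem det_induced_Lambda:
  assumes "L1 \<in> supp_D D1"
  shows "det (mat 1 - L1) = det (mat 1 - induced_Lambda D1 B1 D2 L1 O1)"
proof -
  let ?L2 = "induced_Lambda D1 B1 D2 L1 O1"
  have "det (mat 1 - ?L2)
      = (\<Sum>q | arc_permutation D2 q. of_int (sign q) * (\<Prod>i\<in>UNIV. (mat 1 - ?L2) $ i $ q i))"
    by (rule det_eq_sum_arc_permutations) (simp add: mat_def induced_Lambda_def)
  also have "\<dots> = (\<Sum>p | arc_permutation D1 p.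
      of_int (sign (orient_along D2 p)) * (\<Prod>i\<in>UNIV. (mat 1 - ?L2) $ i $ orient_along D2 p i))"
    by (rule sum.reindex_bij_betw[OF bij_betw_orient_along, symmetric])
  also have "\<dots> = (\<Sum>p | arc_permutation D1 p.
      of_int (sign p) * (\<Prod>i\<in>UNIV. (mat 1 - L1) $ i $ p i))"
    using sign_orient_along prod_orient_along[OF _ assms] by (intro sum.cong) auto
  also have "\<dots> = det (mat 1 - L1)"
    using assms by (intro det_eq_sum_arc_permutations[symmetric]) (simp add: mat_def supp_D_def)
  finally show ?thesis ..
qed

end

theorem lemma4:
  fixes D1 D2 :: "('n::finite \<times> 'n) set" and B1 B2 :: "'n set set"
    and L1 L2 O1 O2 :: "real^'n^'n"
  assumes "simple_mixed_graph D1 B1" and "simple_mixed_graph D2 B2"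
    and "skeleton D1 B1 = skeleton D2 B2"
    and "collider_triples D1 B1 = collider_triples D2 B2"
    and "L1 \<in> supp_D D1" and "O1 \<in> PD B1"
    and "L2 \<in> supp_D D2" and "O2 \<in> PD B2"
    and "L2 = induced_Lambda D1 B1 D2 L1 O1"
    and "offdiag O2 = induced_Omega_od D1 B1 B2 L1 O1"
  shows "det (mat 1 - L1) = det (mat 1 - L2)
         \<and> (invertible (mat 1 - L1) \<longrightarrow> invertible (mat 1 - L2))"
proof -
  interpret equal_skeleton_colliders D1 B1 D2 B2
    using assms(1-4) by unfold_locales
  have "det (mat 1 - L1) = det (mat 1 - L2)"
    using det_induced_Lambda[OF assms(5)] assms(9) by simp
  then show ?thesis
    by (simp add: invertible_det_nz)
qed

end
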